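(* In System $\mathsf{F_{<:}^{K\top}}$, for all $\Theta\vdash S$ and $\Theta\vdash T$: $\Theta \vdash S <: T$ if and only if $\Theta \vdash_A S <: T$.
   Context: System $\mathsf{F_{<:}^{K\top}}$: raw types $T ::= \top \mid X \mid T\to T \mid \forall^{\mathsf K}(X<:T).T \mid \forall^\top(X<:T).T$, up to $\alpha$-conversion. Contexts $\Theta$: finite sequences of $X<:T$ or $x:T$ with distinct variables, each type well-formed over the preceding part. Declarative subtyping $\Theta\vdash S<:T$: (Var) $\Theta,X<:T,\Theta'\vdash X<:T$; (Top) $\Theta\vdash T<:\top$; (Refl) $\Theta\vdash T<:T$; (Trans) from $T<:T'$ and $T'<:T''$ infer $T<:T''$; ($\to$) from $\Theta\vdash S'<:S$ and $\Theta\vdash T<:T'$ infer $\Theta\vdash S\to T<:S'\to T'$; ($\forall$-Fun) from $\Theta,X<:S\vdash T<:T'$ infer $\Theta\vdash\forall^{\mathsf K}(X<:S).T<:\forall^{\mathsf K}(X<:S).T'$; ($\forall$-Loc) from $\Theta\vdash T_0<:S_0$ and $\Theta,X<:S_0\vdash S_1<:T_1$ infer $\Theta\vdash\forall^{\mathsf K}(X<:S_0).S_1<:\forall^\top(X<:T_0).T_1$; ($\forall$-Top) from $\Theta\vdash T_0<:S_0$ and $\Theta,X<:\top\vdash S_1<:T_1$ infer $\Theta\vdash\forall^\top(X<:S_0).S_1<:\forall^\top(X<:T_0).T_1$. Algorithmic subtyping $\Theta\vdash_A S<:T$: (1) $\Theta\vdash_A T<:\top$; (2) $\Theta\vdash_A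 X<:X$; (3) if $T\not\equiv\top$, $T\not\equiv X$ and $\Theta,X<:S,\Theta'\vdash_A S<:T$, then $\Theta,X<:S,\Theta'\vdash_A X<:T$; (4)–(7) the rules $\to$, $\forall$-Fun, $\forall$-Loc, $\forall$-Top above with $\vdash$ replaced by $\vdash_A$ throughout. *)

theory Defs
  imports Main
begin

text \<open>Raw types of System F<:^{K Top}, in de Bruijn representation (so types are
  identified up to alpha-conversion). Index i refers to the i-th binding of the
  context counted from the most recent one (term-variable bindings also count).\<close>

datatype ty =
    Top
  | TVar nat
  | Arr ty ty
  | AllK ty ty    \<comment> \<open>\<forall>^K(X<:T1).T2, X bound in T2 as index 0\<close>
  | AllT ty ty

text \<open>Contexts are lists with the most recent binding first. The type stored in a
  binding lives in the context that follows it in the list (the preceding part).\<close>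

datatype binding = VarB ty | TVarB ty

type_synonym env = "binding list"

fun shiftT :: "nat \<Rightarrow> nat \<Rightarrow> ty \<Rightarrow> ty" where
  "shiftT n k Top = Top"
| "shiftT n k (TVar i) = (if i < k then TVar i else TVar (i + n))"
| "shiftT n k (Arr T U) = Arr (shiftT n k T) (shiftT n k U)"
| "shiftT n k (AllK T U) = AllK (shiftT n k T) (shiftT n (Suc k) U)"
| "shiftT n k (AllT T U) = AllT (shiftT n k T) (shiftT n (Suc k) U)"

fun is_TVarB :: "binding \<Rightarrow> bool" where
  "is_TVarB (TVarB _) = True"
| "is_TVarB (VarB _) = False"

fun wf_ty :: "env \<Rightarrow> ty \<Rightarrow> bool" where
  "wf_ty \<Gamma> Top = True"
| "wf_ty \<Gamma> (TVar i) = (i < length \<Gamma> \<and> is_TVarB (\<Gamma> ! i))"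
| "wf_ty \<Gamma> (Arr T U) = (wf_ty \<Gamma> T \<and> wf_ty \<Gamma> U)"
| "wf_ty \<Gamma> (AllK T U) = (wf_ty \<Gamma> T \<and> wf_ty (TVarB T # \<Gamma>) U)"
| "wf_ty \<Gamma> (AllT T U) = (wf_ty \<Gamma> T \<and> wf_ty (TVarB T # \<Gamma>) U)"

fun wf_env :: "env \<Rightarrow> bool" where
  "wf_env [] = True"
| "wf_env (VarB T # \<Gamma>) = (wf_env \<Gamma> \<and> wf_ty \<Gamma> T)"
| "wf_env (TVarB T # \<Gamma>) = (wf_env \<Gamma> \<and> wf_ty \<Gamma> T)"

inductive sub :: "env \<Rightarrow> ty \<Rightarrow> ty \<Rightarrow> bool" where
  S_Var: "\<lbrakk>wf_env \<Gamma>; i < length \<Gamma>; \<Gamma> ! i = TVarB U\<rbrakk>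
          \<Longrightarrow> sub \<Gamma> (TVar i) (shiftT (Suc i) 0 U)"
| S_Top: "\<lbrakk>wf_env \<Gamma>; wf_ty \<Gamma> T\<rbrakk> \<Longrightarrow> sub \<Gamma> T Top"
| S_Refl: "\<lbrakk>wf_env \<Gamma>; wf_ty \<Gamma> T\<rbrakk> \<Longrightarrow> sub \<Gamma> T T"
| S_Trans: "\<lbrakk>sub \<Gamma> T T'; sub \<Gamma> T' T''\<rbrakk> \<Longrightarrow> sub \<Gamma> T T''"
| S_Arr: "\<lbrakk>sub \<Gamma> S' S; sub \<Gamma> T T'\<rbrakk> \<Longrightarrow> sub \<Gamma> (Arr S T) (Arr S' T')"
| S_AllFun: "sub (TVarB S # \<Gamma>) T T' \<Longrightarrow> sub \<Gamma> (AllK S T) (AllK S T')"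
| S_AllLoc: "\<lbrakk>sub \<Gamma> T0 S0; sub (TVarB S0 # \<Gamma>) S1 T1\<rbrakk>
             \<Longrightarrow> sub \<Gamma> (AllK S0 S1) (AllT T0 T1)"
| S_AllTop: "\<lbrakk>sub \<Gamma> T0 S0; sub (TVarB Top # \<Gamma>) S1 T1\<rbrakk>
             \<Longrightarrow> sub \<Gamma> (AllT S0 S1) (AllT T0 T1)"

inductive asub :: "env \<Rightarrow> ty \<Rightarrow> ty \<Rightarrow> bool" where
  A_Top: "\<lbrakk>wf_env \<Gamma>; wf_ty \<Gamma> T\<rbrakk> \<Longrightarrow> asub \<Gamma> T Top"
| A_Refl: "\<lbrakk>wf_env \<Gamma>; wf_ty \<Gamma> (TVar i)\<rbrakk> \<Longrightarrow> asub \<Gamma> (TVar i) (TVar i)"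
| A_Var: "\<lbrakk>T \<noteq> Top; T \<noteq> TVar i; i < length \<Gamma>; \<Gamma> ! i = TVarB U;
           asub \<Gamma> (shiftT (Suc i) 0 U) T\<rbrakk> \<Longrightarrow> asub \<Gamma> (TVar i) T"
| A_Arr: "\<lbrakk>asub \<Gamma> S' S; asub \<Gamma> T T'\<rbrakk> \<Longrightarrow> asub \<Gamma> (Arr S T) (Arr S' T')"
| A_AllFun: "asub (TVarB S # \<Gamma>) T T' \<Longrightarrow> asub \<Gamma> (AllK S T) (AllK S T')"
| A_AllLoc: "\<lbrakk>asub \<Gamma> T0 S0; asub (TVarB S0 # \<Gamma>) S1 T1\<rbrakk>
             \<Longrightarrow> asub \<Gamma> (AllK S0 S1) (AllT T0 T1)"
| A_AllTop: "\<lbrakk>asub \<Gamma> T0 S0; asub (TVarB Top # \<Gamma>) S1 T1\<rbrakk>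
             \<Longrightarrow> asub \<Gamma> (AllT S0 S1) (AllT T0 T1)"

end

theory Submission
  imports Defs
begin

(* Every algorithmic rule is derivable declaratively, (3) being Var followed by Trans.
   Conversely, Refl and Trans are admissible for the algorithmic relation, and
   transitivity is shown by induction on the size of the middle type with an inner
   induction on the left derivation. Unlike plain F<:, no mutual induction with narrowing
   is needed: the only bound that ever has to be narrowed is the bound Top introduced by
   the forall-Top rule, and a variable bounded by Top has no algorithmic supertypes other
   than itself and Top. *)

lemma wf_ty_same_kinds:
  "wf_ty \<Gamma> T \<Longrightarrow> map is_TVarB \<Gamma> = map is_TVarB \<Gamma>' \<Longrightarrow> wf_ty \<Gamma>' T"
proof (induction T arbitrary: \<Gamma> \<Gamma>')
  case (TVar i)
  then show ?case by (metis length_map nth_map wf_ty.simps(2))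
qed auto

lemma wf_ty_rebind_TVarB:
  "wf_ty (\<Delta> @ TVarB A # \<Gamma>) T \<Longrightarrow> wf_ty (\<Delta> @ TVarB B # \<Gamma>) T"
  by (erule wf_ty_same_kinds) simp

lemma wf_ty_shiftT:
  "wf_ty (\<Delta> @ \<Gamma>) T \<Longrightarrow> map is_TVarB \<Delta>' = map is_TVarB \<Delta>
   \<Longrightarrow> wf_ty (\<Delta>' @ \<Xi> @ \<Gamma>) (shiftT (length \<Xi>) (length \<Delta>) T)"
proof (induction T arbitrary: \<Delta> \<Delta>')
  case (TVar i)
  then have "length \<Delta>' = length \<Delta>" by (metis length_map)
  with TVar show ?case by (cases "i < length \<Delta>") (auto simp: nth_append, metis nth_map)
next
  case (AllK T U)
  then show ?case
    using AllK.IH(2)[of "TVarB T # \<Delta>" "TVarB (shiftT (length \<Xi>) (length \<Delta>) T) # \<Delta>'"]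
    by simp
next
  case (AllT T U)
  then show ?case
    using AllT.IH(2)[of "TVarB T # \<Delta>" "TVarB (shiftT (length \<Xi>) (length \<Delta>) T) # \<Delta>'"]
    by simp
qed auto

lemma wf_env_nth_TVarB:
  "wf_env \<Gamma> \<Longrightarrow> i < length \<Gamma> \<Longrightarrow> \<Gamma> ! i = TVarB U \<Longrightarrow> wf_ty (drop (Suc i) \<Gamma>) U"
  by (induction \<Gamma> arbitrary: i rule: wf_env.induct) (auto simp: nth_Cons split: nat.splits)

lemma wf_ty_shifted_bound:
  assumes "wf_env \<Gamma>" "i < length \<Gamma>" "\<Gamma> ! i = TVarB U"
  shows "wf_ty \<Gamma> (shiftT (Suc i) 0 U)"
proof -
  have "wf_ty ([] @ drop (Suc i) \<Gamma>) U" using wf_env_nth_TVarB assms by simp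
  from wf_ty_shiftT[OF this, of "[]" "take (Suc i) \<Gamma>"]
  show ?thesis using assms by simp
qed

lemma wf_env_rebind_TVarB:
  "wf_env (\<Delta> @ TVarB Q # \<Gamma>) \<Longrightarrow> wf_ty \<Gamma> P \<Longrightarrow> wf_env (\<Delta> @ TVarB P # \<Gamma>)"
proof (induction \<Delta>)
  case (Cons B \<Delta>)
  have "map is_TVarB (\<Delta> @ TVarB Q # \<Gamma>) = map is_TVarB (\<Delta> @ TVarB P # \<Gamma>)" by simp
  with Cons show ?case using wf_ty_same_kinds by (cases B) auto
qed auto

lemma asub_wf: "asub \<Gamma> S T \<Longrightarrow> wf_env \<Gamma> \<and> wf_ty \<Gamma> S \<and> wf_ty \<Gamma> T"
  by (induction rule: asub.induct) (auto intro: wf_ty_rebind_TVarB[of "[]", simplified])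

lemma asub_refl: "wf_env \<Gamma> \<Longrightarrow> wf_ty \<Gamma> T \<Longrightarrow> asub \<Gamma> T T"
proof (induction T arbitrary: \<Gamma>)
  case (AllT T1 T2)
  then have "wf_ty (TVarB Top # \<Gamma>) T2" using wf_ty_rebind_TVarB[of "[]"] by auto
  with AllT show ?case by (auto intro: asub.A_AllTop)
qed (auto intro: asub.intros)

lemma asub_Top_inv: "asub \<Gamma> Top T \<Longrightarrow> T = Top"
  by (cases rule: asub.cases) auto

lemma asub_Arr_inv:
  "asub \<Gamma> (Arr A B) T \<Longrightarrow>
   T = Top \<or> (\<exists>A' B'. T = Arr A' B' \<and> asub \<Gamma> A' A \<and> asub \<Gamma> B B')"
  by (cases rule: asub.cases) auto

lemma asub_AllK_inv:
  "asub \<Gamma> (AllK A B) T \<Longrightarrow>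
   T = Top \<or> (\<exists>B'. T = AllK A B' \<and> asub (TVarB A # \<Gamma>) B B')
   \<or> (\<exists>A' B'. T = AllT A' B' \<and> asub \<Gamma> A' A \<and> asub (TVarB A # \<Gamma>) B B')"
  by (cases rule: asub.cases) auto

lemma asub_AllT_inv:
  "asub \<Gamma> (AllT A B) T \<Longrightarrow>
   T = Top \<or> (\<exists>A' B'. T = AllT A' B' \<and> asub \<Gamma> A' A \<and> asub (TVarB Top # \<Gamma>) B B')"
  by (cases rule: asub.cases) auto

lemma asub_narrow_Top:
  "asub (\<Delta> @ TVarB Top # \<Gamma>) M N \<Longrightarrow> wf_ty \<Gamma> P \<Longrightarrow> asub (\<Delta> @ TVarB P # \<Gamma>) M N"
proof (induction "\<Delta> @ TVarB Top # \<Gamma>" M N arbitrary: \<Delta> rule: asub.induct)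
  case (A_Top T)
  then show ?case using wf_env_rebind_TVarB wf_ty_rebind_TVarB by (metis asub.A_Top)
next
  case (A_Refl i)
  then show ?case using wf_env_rebind_TVarB wf_ty_rebind_TVarB by (metis asub.A_Refl)
next
  case (A_Var T i U)
  show ?case
  proof (cases "i = length \<Delta>")
    case True
    with A_Var have "T = Top" using asub_Top_inv by simp
    with A_Var show ?thesis by simp
  next
    case False
    with A_Var have "(\<Delta> @ TVarB P # \<Gamma>) ! i = TVarB U"
      by (auto simp: nth_append split: nat.splits)
    with A_Var False show ?thesis by (intro asub.A_Var) auto
  qed
next
  case (A_AllFun S T T')
  then show ?case using A_AllFun.hyps(2)[of "TVarB S # \<Delta>"] by (auto intro: asub.intros)
next
  case (A_AllLoc T0 S0 S1 T1)
  then show ?case using A_AllLoc.hyps(4)[of "TVarB S0 # \<Delta>"] by (auto intro: asub.intros)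
next
  case (A_AllTop T0 S0 S1 T1)
  then show ?case using A_AllTop.hyps(4)[of "TVarB Top # \<Delta>"] by (auto intro: asub.intros)
qed (auto intro: asub.A_Arr)

lemma asub_trans_step:
  "asub \<Gamma> S Q \<Longrightarrow> asub \<Gamma> Q T \<Longrightarrow> T \<noteq> Top \<Longrightarrow>
   (\<And>Q' \<Gamma>' S' T'. size Q' < size Q \<Longrightarrow> asub \<Gamma>' S' Q' \<Longrightarrow> asub \<Gamma>' Q' T' \<Longrightarrow> asub \<Gamma>' S' T')
   \<Longrightarrow> asub \<Gamma> S T"
proof (induction arbitrary: T rule: asub.induct)
  case (A_Top \<Gamma> S)
  then show ?case using asub_Top_inv by blast
next
  case (A_Refl \<Gamma> i)
  then show ?case by blast
next
  case (A_Var Q i \<Gamma> U)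
  show ?case
  proof (cases "T = TVar i")
    case True
    with A_Var.prems(1) show ?thesis using asub_wf by (auto intro: asub.A_Refl)
  next
    case False
    with A_Var show ?thesis by (intro asub.A_Var) blast+
  qed
next
  case (A_Arr \<Gamma> S' S T0 T')
  note smaller = A_Arr.prems(3)
  from asub_Arr_inv[OF A_Arr.prems(1)] A_Arr.prems(2) obtain A' B'
    where T: "T = Arr A' B'" "asub \<Gamma> A' S'" "asub \<Gamma> T' B'" by blast
  have "asub \<Gamma> A' S" using smaller[of S' \<Gamma> A' S] T(2) A_Arr.hyps(1) by simp
  moreover have "asub \<Gamma> T0 B'" using smaller[of T' \<Gamma> T0 B'] T(3) A_Arr.hyps(2) by simp
  ultimately show ?case using T(1) by (simp add: asub.A_Arr)
next
  case (A_AllFun S \<Gamma> T0 T')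
  have body: "asub (TVarB S # \<Gamma>) T0 B'" if "asub (TVarB S # \<Gamma>) T' B'" for B'
    using A_AllFun.prems(3)[of T' "TVarB S # \<Gamma>" T0 B'] A_AllFun.hyps that by simp
  from asub_AllK_inv[OF A_AllFun.prems(1)] A_AllFun.prems(2) show ?case
    by (elim disjE exE conjE) (simp_all add: asub.A_AllFun asub.A_AllLoc body)
next
  case (A_AllLoc \<Gamma> T0 S0 S1 T1)
  note smaller = A_AllLoc.prems(3)
  from asub_AllT_inv[OF A_AllLoc.prems(1)] A_AllLoc.prems(2) obtain A' B'
    where T: "T = AllT A' B'" "asub \<Gamma> A' T0" "asub (TVarB Top # \<Gamma>) T1 B'" by blast
  have "wf_ty \<Gamma> S0" using asub_wf[OF A_AllLoc.hyps(1)] by simp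
  with T(3) have "asub (TVarB S0 # \<Gamma>) T1 B'" using asub_narrow_Top[of "[]"] by simp
  then have "asub (TVarB S0 # \<Gamma>) S1 B'"
    using smaller[of T1 "TVarB S0 # \<Gamma>" S1 B'] A_AllLoc.hyps(2) by simp
  moreover have "asub \<Gamma> A' S0" using smaller[of T0 \<Gamma> A' S0] T(2) A_AllLoc.hyps(1) by simp
  ultimately show ?case using T(1) by (simp add: asub.A_AllLoc)
next
  case (A_AllTop \<Gamma> T0 S0 S1 T1)
  note smaller = A_AllTop.prems(3)
  from asub_AllT_inv[OF A_AllTop.prems(1)] A_AllTop.prems(2) obtain A' B'
    where T: "T = AllT A' B'" "asub \<Gamma> A' T0" "asub (TVarB Top # \<Gamma>) T1 B'" by blast
  have "asub \<Gamma> A' S0" using smaller[of T0 \<Gamma> A' S0] T(2) A_AllTop.hyps(1) by simp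
  moreover have "asub (TVarB Top # \<Gamma>) S1 B'"
    using smaller[of T1 "TVarB Top # \<Gamma>" S1 B'] T(3) A_AllTop.hyps(2) by simp
  ultimately show ?case using T(1) by (simp add: asub.A_AllTop)
qed

lemma asub_trans: "asub \<Gamma> S Q \<Longrightarrow> asub \<Gamma> Q T \<Longrightarrow> asub \<Gamma> S T"
proof (induction Q arbitrary: \<Gamma> S T rule: measure_induct_rule[where f = size])
  case (less Q)
  show ?case
  proof (cases "T = Top")
    case True
    with less.prems(1) show ?thesis using asub_wf by (auto intro: asub.A_Top)
  next
    case False
    with less show ?thesis using asub_trans_step by blast
  qed
qed

lemma shiftT_Suc_ne_TVar: "shiftT (Suc i) 0 U \<noteq> TVar i"
  by (cases U) auto

lemma sub_imp_asub: "sub \<Gamma> S T \<Longrightarrow> asub \<Gamma> S T"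
proof (induction rule: sub.induct)
  case (S_Var \<Gamma> i U)
  then have "asub \<Gamma> (shiftT (Suc i) 0 U) (shiftT (Suc i) 0 U)"
    using wf_ty_shifted_bound asub_refl by blast
  with S_Var show ?case
    using shiftT_Suc_ne_TVar by (cases "shiftT (Suc i) 0 U = Top") (auto intro: asub.intros)
next
  case (S_Refl \<Gamma> T) then show ?case using asub_refl by blast
next
  case (S_Trans \<Gamma> T T' T'') then show ?case using asub_trans by blast
qed (auto intro: asub.intros)

lemma asub_imp_sub: "asub \<Gamma> S T \<Longrightarrow> sub \<Gamma> S T"
proof (induction rule: asub.induct)
  case (A_Var T i \<Gamma> U)
  then have "sub \<Gamma> (TVar i) (shiftT (Suc i) 0 U)" using asub_wf by (auto intro: sub.S_Var)
  with A_Var show ?case by (blast intro: sub.S_Trans)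
qed (auto intro: sub.intros)

theorem proposition6p2:
  assumes "wf_env \<Theta>" and "wf_ty \<Theta> S" and "wf_ty \<Theta> T"
  shows "sub \<Theta> S T \<longleftrightarrow> asub \<Theta> S T"
  using sub_imp_asub asub_imp_sub by blast

end
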